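(* Let $(G,O)$ be an equipped finite group such that the elements of $O=C_1\sqcup\dots\sqcup C_m$ generate $G$. Let $n_i=|C_i|$ and let $p_i$ be the order of the elements of $C_i$. Let $s_1\in S(G,O)$ satisfy $\tau_i(s_1)>n_ip_i$ for all $1\le i\le m$, and let $s_2=y_{a_1,b_1}\cdots y_{a_k,b_k}$ be such that $s_1\cdot s_2\in\mathbb S(G,O)^G$. Then there exists $z\in S(G,O)$ with $s_1\cdot s_2=z\cdot(y_{{\bf1},{\bf1}})^k$ in $\mathbb S(G,O)$.
   Context: Conventions: $x^y=y^{-1}xy$, $[x,y]=xyx^{-1}y^{-1}$. An equipped group: $O\subset G$, ${\bf 1}\notin O$, $O$ a union of conjugacy classes $C_1,\dots,C_m$ in fixed order. The strong covering semigroup $\mathbb S(G,O)$ is generated by $x_g$ ($g\in O$) and $y_{a,b}$ ($a,b\in G$) subject to, for all $g_1,g_2,g\in O$, $a,b\in G$: $x_{g_1}x_{g_2}=x_{g_2}x_{g_1^{g_2}}$; $x_gy_{a,b}=y_{a,b}x_{g^{[a,b]}}$; $x_gy_{a,b}=x_{g^{c_1}}y_{ga,b}$, $c_1=ab^{-1}a^{-1}g^{-1}$; $y_{a,b}x_g=y_{a,g^{-1}b}x_{g^{c_2}}$, $c_2=ba^{-1}b^{-1}g$; $x_gy_{a,b}=x_{g^{[a,b]}}y_{a^{g^{[a,b]}},b^{g^{[a,b]}}}$. $S(G,O)$ is its subsemigroup generated by the $x_g$. For $s$ represented by a word, $\tau_i(s)$ is the number of letters $x_g$ with $g\in C_i$,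 and $G_s$ is the subgroup of $G$ generated by all $g$ and all $a,b$ indexing the letters (both independent of the word); $\mathbb S(G,O)^G=\{s:G_s=G\}$. *)

theory Defs
  imports "HOL-Algebra.Algebra"
begin

text \<open>Conventions: x^y = y^-1 x y, [x,y] = x y x^-1 y^-1.\<close>

definition gconj :: "'a monoid \<Rightarrow> 'a \<Rightarrow> 'a \<Rightarrow> 'a" where
  "gconj G x y = inv\<^bsub>G\<^esub> y \<otimes>\<^bsub>G\<^esub> x \<otimes>\<^bsub>G\<^esub> y"

definition gcomm :: "'a monoid \<Rightarrow> 'a \<Rightarrow> 'a \<Rightarrow> 'a" where
  "gcomm G x y = x \<otimes>\<^bsub>G\<^esub> y \<otimes>\<^bsub>G\<^esub> inv\<^bsub>G\<^esub> x \<otimes>\<^bsub>G\<^esub> inv\<^bsub>G\<^esub> y"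

definition conj_class :: "'a monoid \<Rightarrow> 'a \<Rightarrow> 'a set" where
  "conj_class G g = {gconj G g h | h. h \<in> carrier G}"

definition equipped :: "'a monoid \<Rightarrow> 'a set list \<Rightarrow> bool" where
  "equipped G Cs \<longleftrightarrow> group G \<and> distinct Cs
     \<and> (\<forall>C\<in>set Cs. \<exists>g\<in>carrier G. C = conj_class G g)
     \<and> \<one>\<^bsub>G\<^esub> \<notin> \<Union>(set Cs)"

text \<open>Letters of the strong covering semigroup: LX g = x_g and LY a b = y_{a,b}.\<close>
datatype 'a letter = LX 'a | LY 'a 'a

definition valid_letter :: "'a monoid \<Rightarrow> 'a set \<Rightarrow> 'a letter \<Rightarrow> bool" where
  "valid_letter G Os l = (case l of LX g \<Rightarrow> g \<in> Os | LY a b \<Rightarrow> a \<in> carrier G \<and> b \<in> carrier G)"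

definition valid_word :: "'a monoid \<Rightarrow> 'a set \<Rightarrow> 'a letter list \<Rightarrow> bool" where
  "valid_word G Os w \<longleftrightarrow> (\<forall>l\<in>set w. valid_letter G Os l)"

inductive base_rel :: "'a monoid \<Rightarrow> 'a set \<Rightarrow> 'a letter list \<Rightarrow> 'a letter list \<Rightarrow> bool"
  for G Os where
  r1: "g1 \<in> Os \<Longrightarrow> g2 \<in> Os \<Longrightarrow> base_rel G Os [LX g1, LX g2] [LX g2, LX (gconj G g1 g2)]"
| r2: "g \<in> Os \<Longrightarrow> a \<in> carrier G \<Longrightarrow> b \<in> carrier G \<Longrightarrow>
       base_rel G Os [LX g, LY a b] [LY a b, LX (gconj G g (gcomm G a b))]"
| r3: "g \<in> Os \<Longrightarrow> a \<in> carrier G \<Longrightarrow> b \<in> carrier G \<Longrightarrow>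
       base_rel G Os [LX g, LY a b]
         [LX (gconj G g (a \<otimes>\<^bsub>G\<^esub> inv\<^bsub>G\<^esub> b \<otimes>\<^bsub>G\<^esub> inv\<^bsub>G\<^esub> a \<otimes>\<^bsub>G\<^esub> inv\<^bsub>G\<^esub> g)),
          LY (g \<otimes>\<^bsub>G\<^esub> a) b]"
| r4: "g \<in> Os \<Longrightarrow> a \<in> carrier G \<Longrightarrow> b \<in> carrier G \<Longrightarrow>
       base_rel G Os [LY a b, LX g]
         [LY a (inv\<^bsub>G\<^esub> g \<otimes>\<^bsub>G\<^esub> b),
          LX (gconj G g (b \<otimes>\<^bsub>G\<^esub> inv\<^bsub>G\<^esub> a \<otimes>\<^bsub>G\<^esub> inv\<^bsub>G\<^esub> b \<otimes>\<^bsub>G\<^esub> g))]"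
| r5: "g \<in> Os \<Longrightarrow> a \<in> carrier G \<Longrightarrow> b \<in> carrier G \<Longrightarrow>
       base_rel G Os [LX g, LY a b]
         [LX (gconj G g (gcomm G a b)),
          LY (gconj G a (gconj G g (gcomm G a b))) (gconj G b (gconj G g (gcomm G a b)))]"

inductive sgeq :: "'a monoid \<Rightarrow> 'a set \<Rightarrow> 'a letter list \<Rightarrow> 'a letter list \<Rightarrow> bool"
  for G Os where
  refl: "sgeq G Os w w"
| base: "base_rel G Os u v \<Longrightarrow> valid_word G Os p \<Longrightarrow> valid_word G Os q \<Longrightarrow>
         sgeq G Os (p @ u @ q) (p @ v @ q)"
| sym: "sgeq G Os u v \<Longrightarrow> sgeq G Os v u"
| trans: "sgeq G Os u v \<Longrightarrow> sgeq G Os v w \<Longrightarrow> sgeq G Os u w"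

definition is_x_word :: "'a letter list \<Rightarrow> bool" where
  "is_x_word w \<longleftrightarrow> (\<forall>l\<in>set w. \<exists>g. l = LX g)"

definition tau :: "'a set \<Rightarrow> 'a letter list \<Rightarrow> nat" where
  "tau C w = length (filter (\<lambda>l. \<exists>g\<in>C. l = LX g) w)"

fun letter_elems :: "'a letter \<Rightarrow> 'a set" where
  "letter_elems (LX g) = {g}"
| "letter_elems (LY a b) = {a, b}"

definition G_sub :: "'a monoid \<Rightarrow> 'a letter list \<Rightarrow> 'a set" where
  "G_sub G w = generate G (\<Union>l\<in>set w. letter_elems l)"

end

theory Submission
  imports Defs
begin

text \<open>A block $x_g^p$ with $g^p = 1$ commutes with every letter, and the relations let such a
  block be conjugated by every letter of the word; since $\tau_i(s_1) > n_i p_i$, pigeonhole yields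
  a block of this kind for each class, and conjugating it (which preserves all $\tau_i$) gives a
  block of any element of the class. Adjoining the resulting letters one by one turns $s_1$ into an
  x-word whose indices alone generate $G$. Next to $y_{a,b}$ a block of $x_h$, $h \in O$, lets
  relation r3 replace $a$ by $ha$, so $a$ can be made $1$; then r4 lets every letter $x_h$ replace
  $y_{1,c}$ by $y_{1,h^{-1}c}$, so $c$ can be made $1$. Finally $y_{1,1}$ commutes with all
  x-letters and the $k$ letters $y_{1,1}$ are collected on the right.\<close>

lemma sgeq_append_cong:
  assumes "sgeq G Os u v" "valid_word G Os p" "valid_word G Os q"
  shows "sgeq G Os (p @ u @ q) (p @ v @ q)"
  using assms
proof (induction rule: sgeq.induct)
  case (base u v p' q')
  have "sgeq G Os ((p @ p') @ u @ (q' @ q)) ((p @ p') @ v @ (q' @ q))"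
    by (rule sgeq.base) (use base in \<open>auto simp: valid_word_def\<close>)
  then show ?case by simp
next
  case (trans u v w)
  then show ?case by (blast intro: sgeq.trans)
qed (auto intro: sgeq.refl sgeq.sym)

abbreviation labels :: "'a letter list \<Rightarrow> 'a set" where
  "labels w \<equiv> \<Union>(letter_elems ` set w)"

abbreviation y_word :: "('a \<times> 'a) list \<Rightarrow> 'a letter list" where
  "y_word ab \<equiv> map (\<lambda>(a,b). LY a b) ab"

lemma is_x_word_simps [simp]:
  "is_x_word []" "is_x_word (l # w) \<longleftrightarrow> (\<exists>g. l = LX g) \<and> is_x_word w"
  "is_x_word (u @ v) \<longleftrightarrow> is_x_word u \<and> is_x_word v" "is_x_word (replicate n (LX g))"
  by (auto simp: is_x_word_def)

lemma tau_simps [simp]: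
  "tau C [] = 0" "tau C (u @ v) = tau C u + tau C v"
  "tau C (LX k # w) = (if k \<in> C then 1 else 0) + tau C w"
  "tau C (LY a b # w) = tau C w"
  "tau C (replicate n (LX g)) = (if g \<in> C then n else 0)"
  by (auto simp: tau_def)

lemma tau_eq_sum_count_list:
  assumes "finite C"
  shows "tau C w = (\<Sum>g\<in>C. count_list w (LX g))"
proof (induction w)
  case (Cons l w)
  show ?case
  proof (cases l)
    case (LX k)
    have "(\<Sum>g\<in>C. count_list (l # w) (LX g)) = (\<Sum>g\<in>C. (if k = g then 1 else 0) + count_list w (LX g))"
      using LX by (intro sum.cong) auto
    also have "\<dots> = (if k \<in> C then 1 else 0) + (\<Sum>g\<in>C. count_list w (LX g))"
      using assms by (simp add: sum.distrib)
    finally show ?thesis using Cons LX by simp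
  qed (use Cons in simp)
qed simp

lemma tau_large_imp_count_large:
  assumes fin: "finite C" and ne: "C \<noteq> {}" and large: "\<forall>g\<in>C. card C * f g < tau C w"
  shows "\<exists>g\<in>C. f g < count_list w (LX g)"
proof (rule ccontr)
  assume "\<not> ?thesis"
  then have le: "\<forall>g\<in>C. count_list w (LX g) \<le> f g" by auto
  obtain g0 where g0: "g0 \<in> C" "\<forall>g\<in>C. f g \<le> f g0"
    using fin ne Max_in[of "f ` C"] Max_ge[of "f ` C"] by fastforce
  have "tau C w = (\<Sum>g\<in>C. count_list w (LX g))" using tau_eq_sum_count_list fin .
  also have "\<dots> \<le> card C * f g0"
    using sum_bounded_above[of C "\<lambda>g. count_list w (LX g)" "f g0"] le g0(2) by force
  finally show False using large g0(1) by (meson leD)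
qed

lemma (in group) mult_inv_cancel_left [simp]: "x \<in> carrier G \<Longrightarrow> y \<in> carrier G \<Longrightarrow> x \<otimes> (inv x \<otimes> y) = y"
  by (simp add: m_assoc[symmetric])

lemma (in group) inv_mult_cancel_left [simp]: "x \<in> carrier G \<Longrightarrow> y \<in> carrier G \<Longrightarrow> inv x \<otimes> (x \<otimes> y) = y"
  by (simp add: m_assoc[symmetric])

lemma (in group) nat_pow_mult_self_commute: "x \<in> carrier G \<Longrightarrow> x [^] (j::nat) \<otimes> x = x \<otimes> x [^] j"
  by (simp add: nat_pow_Suc2[symmetric])

lemma (in group) generate_eq_carrier_if_subset:
  assumes "generate G A = carrier G" "A \<subseteq> generate G B" "B \<subseteq> carrier G"
  shows "generate G B = carrier G"
  using generate_subgroup_incl[OF assms(2) generate_is_subgroup[OF assms(3)]] generate_incl[OF assms(3)]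
    assms(1) by simp

lemma (in group) finite_mult_closed_inv:
  assumes fin: "finite (carrier G)" and one: "P \<one>"
    and mult: "\<And>x y. x \<in> carrier G \<Longrightarrow> y \<in> carrier G \<Longrightarrow> P x \<Longrightarrow> P y \<Longrightarrow> P (x \<otimes> y)"
    and x: "x \<in> carrier G" "P x"
  shows "P (inv x)"
proof -
  have pow: "P (x [^] (n::nat))" for n
    by (induction n) (use one mult x in auto)
  have "x [^] (ord x - 1) \<otimes> x = \<one>"
    using ord_ge_1[OF fin x(1)] x(1) by (simp add: nat_pow_Suc[symmetric] del: nat_pow_Suc)
  then have "inv x = x [^] (ord x - 1)" using x(1) by (intro inv_equality) auto
  then show ?thesis using pow by simp
qed

lemma (in group) finite_generate_induct:
  assumes fin: "finite (carrier G)" and S: "S \<subseteq> carrier G" and t: "t \<in> generate G S"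
    and one: "P \<one>" and gens: "\<And>s. s \<in> S \<Longrightarrow> P s"
    and mult: "\<And>x y. x \<in> carrier G \<Longrightarrow> y \<in> carrier G \<Longrightarrow> P x \<Longrightarrow> P y \<Longrightarrow> P (x \<otimes> y)"
  shows "P t"
  using t
proof (induction rule: generate.induct)
  case (inv h)
  then show ?case using finite_mult_closed_inv[OF fin one mult] gens S by blast
next
  case (eng h1 h2)
  then show ?case using mult generate_incl[OF S] by blast
qed (use one gens in auto)

locale equipped_group =
  fixes G :: "'a monoid" (structure) and Cs :: "'a set list"
  assumes equipped: "equipped G Cs"

sublocale equipped_group \<subseteq> group G
  using equipped by (simp add: equipped_def)

context equipped_group
begin

lemma gconj_closed [simp]: "k \<in> carrier G \<Longrightarrow> t \<in> carrier G \<Longrightarrow> gconj G k t \<in> carrier G"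
  by (simp add: gconj_def)

lemma gcomm_closed [simp]: "a \<in> carrier G \<Longrightarrow> b \<in> carrier G \<Longrightarrow> gcomm G a b \<in> carrier G"
  by (simp add: gcomm_def)

lemma gconj_one [simp]: "k \<in> carrier G \<Longrightarrow> gconj G k \<one> = k"
  by (simp add: gconj_def)

lemma gcomm_one_left [simp]: "c \<in> carrier G \<Longrightarrow> gcomm G \<one> c = \<one>"
  by (simp add: gcomm_def)

lemma gconj_gconj:
  "k \<in> carrier G \<Longrightarrow> s \<in> carrier G \<Longrightarrow> t \<in> carrier G \<Longrightarrow> gconj G (gconj G k s) t = gconj G k (s \<otimes> t)"
  by (simp add: gconj_def m_assoc inv_mult_group)

lemma gconj_inv_cancel [simp]:
  "k \<in> carrier G \<Longrightarrow> t \<in> carrier G \<Longrightarrow> gconj G (gconj G k (inv t)) t = k"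
  "k \<in> carrier G \<Longrightarrow> t \<in> carrier G \<Longrightarrow> gconj G (gconj G k t) (inv t) = k"
  by (simp_all add: gconj_def m_assoc)

lemma gconj_nat_pow: "k \<in> carrier G \<Longrightarrow> t \<in> carrier G \<Longrightarrow> gconj G k t [^] (n::nat) = gconj G (k [^] n) t"
  by (induction n) (simp_all add: gconj_def m_assoc)

lemma gconj_pow_eq_one: "k \<in> carrier G \<Longrightarrow> t \<in> carrier G \<Longrightarrow> k [^] (n::nat) = \<one> \<Longrightarrow> gconj G k t [^] n = \<one>"
  by (simp add: gconj_nat_pow) (simp add: gconj_def)

abbreviation "Os \<equiv> \<Union>(set Cs)"

abbreviation sg_equiv (infix "\<approx>\<^sub>S" 50) where
  "u \<approx>\<^sub>S v \<equiv> sgeq G Os u v"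

abbreviation "valid \<equiv> valid_word G Os"

abbreviation xpow :: "'a \<Rightarrow> nat \<Rightarrow> 'a letter list" where
  "xpow g n \<equiv> replicate n (LX g)"

declare Union_iff [simp del] \<comment> \<open>keeps membership in \<open>Os\<close> atomic for the simplifier\<close>

lemma class_is_conj_class: "C \<in> set Cs \<Longrightarrow> \<exists>g\<in>carrier G. C = conj_class G g"
  using equipped by (auto simp: equipped_def)

lemma class_subset_carrier: "C \<in> set Cs \<Longrightarrow> C \<subseteq> carrier G"
  using class_is_conj_class[of C] by (auto simp: conj_class_def)

lemma class_nonempty: "C \<in> set Cs \<Longrightarrow> C \<noteq> {}"
  using class_is_conj_class by (force simp: conj_class_def)

lemma Os_carrier [simp]: "k \<in> Os \<Longrightarrow> k \<in> carrier G"
  using class_subset_carrier by (auto simp: Union_iff)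

lemma gconj_mem_class_iff:
  assumes "C \<in> set Cs" "k \<in> carrier G" "t \<in> carrier G"
  shows "gconj G k t \<in> C \<longleftrightarrow> k \<in> C"
proof -
  obtain g where g: "g \<in> carrier G" "C = conj_class G g" using class_is_conj_class assms(1) by blast
  have closed: "gconj G x s \<in> C" if x: "x \<in> C" and s: "s \<in> carrier G" for x s
  proof -
    obtain h where "h \<in> carrier G" "x = gconj G g h" using x g by (auto simp: conj_class_def)
    then show ?thesis using g s by (auto simp: conj_class_def gconj_gconj)
  qed
  show ?thesis using closed[of k t] closed[of "gconj G k t" "inv t"] assms by auto
qed

lemma gconj_mem_Os_iff [simp]: "k \<in> carrier G \<Longrightarrow> t \<in> carrier G \<Longrightarrow> gconj G k t \<in> Os \<longleftrightarrow> k \<in> Os"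
  using gconj_mem_class_iff by (auto simp: Union_iff)

lemma class_conjugate:
  assumes "C \<in> set Cs" "g \<in> C" "h \<in> C"
  obtains t where "t \<in> carrier G" "h = gconj G g t"
proof -
  obtain g0 where g0: "g0 \<in> carrier G" "C = conj_class G g0" using class_is_conj_class assms(1) by blast
  obtain s1 s2 where s: "s1 \<in> carrier G" "s2 \<in> carrier G" "g = gconj G g0 s1" "h = gconj G g0 s2"
    using assms g0 by (auto simp: conj_class_def)
  have "h = gconj G g (inv s1 \<otimes> s2)" using s g0 by (simp add: gconj_gconj m_assoc[symmetric])
  with s show ?thesis using that by (meson inv_closed m_closed)
qed

lemma valid_simps [simp]:
  "valid []" "valid (l # w) \<longleftrightarrow> valid_letter G Os l \<and> valid w"
  "valid (u @ v) \<longleftrightarrow> valid u \<and> valid v"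
  "valid (replicate n l) \<longleftrightarrow> n = 0 \<or> valid_letter G Os l"
  "valid_letter G Os (LX g) \<longleftrightarrow> g \<in> Os"
  "valid_letter G Os (LY a b) \<longleftrightarrow> a \<in> carrier G \<and> b \<in> carrier G"
  by (auto simp: valid_word_def valid_letter_def)

lemma labels_valid_carrier: "valid w \<Longrightarrow> labels w \<subseteq> carrier G"
proof (induction w)
  case (Cons l w)
  then show ?case by (cases l) auto
qed simp

lemma G_sub_subset_carrier: "valid w \<Longrightarrow> G_sub G w \<subseteq> carrier G"
  unfolding G_sub_def by (rule generate_incl[OF labels_valid_carrier])

lemma G_sub_append_eq_carrier:
  assumes "G_sub G (w @ v) = carrier G" "labels w \<subseteq> generate G (labels u)" "valid u" "valid v"
  shows "G_sub G (u @ v) = carrier G"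
  unfolding G_sub_def
proof (rule generate_eq_carrier_if_subset[OF assms(1)[unfolded G_sub_def]])
  have "generate G (labels u) \<subseteq> generate G (labels (u @ v))"
    by (rule mono_generate) auto
  moreover have "labels v \<subseteq> generate G (labels (u @ v))"
    by (intro subsetI generate.incl) simp
  ultimately show "labels (w @ v) \<subseteq> generate G (labels (u @ v))"
    using assms(2) by auto
  show "labels (u @ v) \<subseteq> carrier G" using labels_valid_carrier[of "u @ v"] assms(3,4) by simp
qed

lemma sg_sym: "u \<approx>\<^sub>S v \<Longrightarrow> v \<approx>\<^sub>S u"
  by (rule sgeq.sym)

lemma sg_trans [trans]: "u \<approx>\<^sub>S v \<Longrightarrow> v \<approx>\<^sub>S w \<Longrightarrow> u \<approx>\<^sub>S w"
  by (rule sgeq.trans)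

lemma sg_refl [simp]: "w \<approx>\<^sub>S w"
  by (rule sgeq.refl)

lemma sg_congL: "u \<approx>\<^sub>S v \<Longrightarrow> valid p \<Longrightarrow> p @ u \<approx>\<^sub>S p @ v"
  using sgeq_append_cong[of G Os u v p "[]"] by simp

lemma sg_congR: "u \<approx>\<^sub>S v \<Longrightarrow> valid q \<Longrightarrow> u @ q \<approx>\<^sub>S v @ q"
  using sgeq_append_cong[of G Os u v "[]" q] by simp

lemma sg_base: "base_rel G Os u v \<Longrightarrow> u \<approx>\<^sub>S v"
  using sgeq.base[of G Os u v "[]" "[]"] by simp

lemma x_x_swap: "g1 \<in> Os \<Longrightarrow> g2 \<in> Os \<Longrightarrow> [LX g1, LX g2] \<approx>\<^sub>S [LX g2, LX (gconj G g1 g2)]"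
  by (rule sg_base, rule base_rel.r1)

lemma x_x_swap_back: "g \<in> Os \<Longrightarrow> k \<in> Os \<Longrightarrow> [LX g, LX k] \<approx>\<^sub>S [LX (gconj G k (inv g)), LX g]"
  using x_x_swap[of "gconj G k (inv g)" g] by (simp add: sg_sym)

lemma x_y_swap: "g \<in> Os \<Longrightarrow> a \<in> carrier G \<Longrightarrow> b \<in> carrier G \<Longrightarrow>
    [LX g, LY a b] \<approx>\<^sub>S [LY a b, LX (gconj G g (gcomm G a b))]"
  by (rule sg_base, rule base_rel.r2)

lemma y_x_swap:
  assumes "h \<in> Os" "a \<in> carrier G" "b \<in> carrier G"
  shows "[LY a b, LX h] \<approx>\<^sub>S [LX h, LY (gconj G a h) (gconj G b h)]"
proof -
  define g where "g = gconj G h (inv (gcomm G a b))"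
  have g: "g \<in> Os" "gconj G g (gcomm G a b) = h" using assms by (simp_all add: g_def)
  have "[LY a b, LX h] \<approx>\<^sub>S [LX g, LY a b]"
    using x_y_swap[OF g(1) assms(2,3)] g(2) by (simp add: sg_sym)
  also have "[LX g, LY a b] \<approx>\<^sub>S [LX h, LY (gconj G a h) (gconj G b h)]"
    using sg_base[OF base_rel.r5[OF g(1) assms(2,3)]] g(2) by simp
  finally show ?thesis .
qed

text \<open>Composing r3 (resp. r4) with r2 cancels the conjugation of the x-letter, so that only a
  one-sided multiplication of an index of the y-letter remains.\<close>

lemma x_y_shift:
  assumes "g \<in> Os" "a \<in> carrier G" "b \<in> carrier G"
  shows "[LX g, LY a b] \<approx>\<^sub>S [LY (g \<otimes> a) b, LX (gconj G g (inv b))]"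
proof -
  define g' where "g' = gconj G g (a \<otimes> inv b \<otimes> inv a \<otimes> inv g)"
  have g': "g' \<in> Os" using assms by (simp add: g'_def)
  have g'_comm: "gconj G g' (gcomm G (g \<otimes> a) b) = gconj G g (inv b)"
    using assms by (simp add: g'_def gconj_def gcomm_def m_assoc inv_mult_group)
  have "[LX g, LY a b] \<approx>\<^sub>S [LX g', LY (g \<otimes> a) b]"
    unfolding g'_def by (rule sg_base, rule base_rel.r3) (use assms in auto)
  also have "\<dots> \<approx>\<^sub>S [LY (g \<otimes> a) b, LX (gconj G g (inv b))]"
    using x_y_swap[OF g', of "g \<otimes> a" b] assms g'_comm by simp
  finally show ?thesis .
qed

lemma y_x_shift:
  assumes "g \<in> Os" "a \<in> carrier G" "b \<in> carrier G"
  shows "[LY a b, LX g] \<approx>\<^sub>S [LX (gconj G g (inv a)), LY a (inv g \<otimes> b)]"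
proof -
  define g' where "g' = gconj G g (b \<otimes> inv a \<otimes> inv b \<otimes> g)"
  have g': "gconj G (gconj G g (inv a)) (gcomm G a (inv g \<otimes> b)) = g'"
    using assms by (simp add: g'_def gconj_def gcomm_def m_assoc inv_mult_group)
  have "[LY a b, LX g] \<approx>\<^sub>S [LY a (inv g \<otimes> b), LX g']"
    unfolding g'_def by (rule sg_base, rule base_rel.r4) (use assms in auto)
  also have "\<dots> \<approx>\<^sub>S [LX (gconj G g (inv a)), LY a (inv g \<otimes> b)]"
    using sg_sym[OF x_y_swap[of "gconj G g (inv a)" a "inv g \<otimes> b"]] assms g' by simp
  finally show ?thesis .
qed

lemma y_one_x_shift:
  assumes "g \<in> Os" "b \<in> carrier G"
  shows "[LY \<one> b, LX g] \<approx>\<^sub>S [LY \<one> (inv g \<otimes> b), LX g]"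
proof -
  have "gconj G g (b \<otimes> inv \<one> \<otimes> inv b \<otimes> g) = g"
    using assms by (simp add: gconj_def m_assoc)
  then show ?thesis using sg_base[OF base_rel.r4[OF assms(1) one_closed assms(2)]] by simp
qed

section \<open>Blocks of letters\<close>

lemma xpow_x_swap_back:
  assumes "g \<in> Os" "k \<in> Os"
  shows "xpow g j @ [LX k] \<approx>\<^sub>S [LX (gconj G k (inv (g [^] j)))] @ xpow g j"
proof (induction j)
  case (Suc j)
  define k' where "k' = gconj G k (inv (g [^] j))"
  have k': "k' \<in> Os" using assms by (simp add: k'_def)
  have "xpow g (Suc j) @ [LX k] \<approx>\<^sub>S LX g # LX k' # xpow g j"
    using sg_congL[OF Suc, of "[LX g]"] assms by (simp add: k'_def)
  also have "\<dots> \<approx>\<^sub>S LX (gconj G k' (inv g)) # LX g # xpow g j"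
    using sg_congR[OF x_x_swap_back[OF assms(1) k'], of "xpow g j"] assms by simp
  also have "gconj G k' (inv g) = gconj G k (inv (g [^] Suc j))"
    using assms by (simp add: k'_def gconj_gconj inv_mult_group nat_pow_mult_self_commute)
  finally show ?case by simp
qed (use assms in simp)

lemma xpow_x_swap:
  assumes "g \<in> Os" "k \<in> Os"
  shows "xpow g j @ [LX k] \<approx>\<^sub>S [LX k] @ xpow (gconj G g k) j"
proof (induction j)
  case (Suc j)
  have "xpow g (Suc j) @ [LX k] \<approx>\<^sub>S LX g # LX k # xpow (gconj G g k) j"
    using sg_congL[OF Suc, of "[LX g]"] assms by simp
  also have "\<dots> \<approx>\<^sub>S LX k # LX (gconj G g k) # xpow (gconj G g k) j"
    using sg_congR[OF x_x_swap[OF assms], of "xpow (gconj G g k) j"] assms by simp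
  finally show ?case by simp
qed simp

lemma xpow_order_central:
  assumes "g \<in> Os" "g [^] p = \<one>" "is_x_word v" "valid v"
  shows "xpow g p @ v \<approx>\<^sub>S v @ xpow g p"
  using assms(3,4)
proof (induction v)
  case (Cons l v)
  then obtain k where l: "l = LX k" and k: "k \<in> Os" and v: "is_x_word v" "valid v"
    by auto
  have "xpow g p @ [LX k] @ v \<approx>\<^sub>S [LX k] @ xpow g p @ v"
    using sg_congR[OF xpow_x_swap_back[OF assms(1) k, of p], of v] assms k v by simp
  also have "\<dots> \<approx>\<^sub>S [LX k] @ v @ xpow g p"
    using sg_congL[OF Cons.IH[OF v], of "[LX k]"] k by simp
  finally show ?case using l by simp
qed simp

lemma y_xpow_swap:
  assumes "h \<in> Os"
  shows "a \<in> carrier G \<Longrightarrow> b \<in> carrier G \<Longrightarrow>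
    [LY a b] @ xpow h j \<approx>\<^sub>S xpow h j @ [LY (gconj G a (h [^] j)) (gconj G b (h [^] j))]"
proof (induction j arbitrary: a b)
  case (Suc j)
  have "[LY a b] @ xpow h (Suc j) \<approx>\<^sub>S [LX h, LY (gconj G a h) (gconj G b h)] @ xpow h j"
    using sg_congR[OF y_x_swap[OF assms Suc.prems], of "xpow h j"] assms by simp
  also have "\<dots> \<approx>\<^sub>S [LX h] @ xpow h j @
      [LY (gconj G (gconj G a h) (h [^] j)) (gconj G (gconj G b h) (h [^] j))]"
    using sg_congL[OF Suc.IH[of "gconj G a h" "gconj G b h"], of "[LX h]"] assms Suc.prems by simp
  finally show ?case using assms Suc.prems by (simp add: gconj_gconj nat_pow_mult_self_commute)
qed simp

lemma xpow_order_central_y: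
  "h \<in> Os \<Longrightarrow> h [^] p = \<one> \<Longrightarrow> a \<in> carrier G \<Longrightarrow> b \<in> carrier G \<Longrightarrow>
    [LY a b] @ xpow h p \<approx>\<^sub>S xpow h p @ [LY a b]"
  using y_xpow_swap[of h a b p] by simp

lemma xpow_order_central_y_word:
  assumes "h \<in> Os" "h [^] p = \<one>" "valid (y_word ab)"
  shows "xpow h p @ y_word ab \<approx>\<^sub>S y_word ab @ xpow h p"
  using assms(3)
proof (induction ab)
  case (Cons x ab)
  obtain a b where x: "x = (a, b)" by fastforce
  have ab: "a \<in> carrier G" "b \<in> carrier G" "valid (y_word ab)" using Cons.prems x by auto
  have "xpow h p @ [LY a b] @ y_word ab \<approx>\<^sub>S [LY a b] @ xpow h p @ y_word ab"
    using sg_congR[OF sg_sym[OF xpow_order_central_y[OF assms(1,2) ab(1,2)]] ab(3)] by simp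
  also have "\<dots> \<approx>\<^sub>S [LY a b] @ y_word ab @ xpow h p"
    using sg_congL[OF Cons.IH[OF ab(3)], of "[LY a b]"] ab by simp
  finally show ?case using x by simp
qed simp

lemma xpow_y_shift:
  assumes "g \<in> Os" "b \<in> carrier G"
  shows "a \<in> carrier G \<Longrightarrow> xpow g j @ [LY a b] \<approx>\<^sub>S [LY (g [^] j \<otimes> a) b] @ xpow (gconj G g (inv b)) j"
proof (induction j arbitrary: a)
  case (Suc j)
  let ?g' = "gconj G g (inv b)"
  have ga: "g \<otimes> a \<in> carrier G" using assms Suc.prems by simp
  have "xpow g (Suc j) @ [LY a b] = xpow g j @ [LX g, LY a b]"
    by (simp add: replicate_append_same[symmetric])
  also have "\<dots> \<approx>\<^sub>S (xpow g j @ [LY (g \<otimes> a) b]) @ [LX ?g']"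
    using sg_congL[OF x_y_shift[OF assms(1) Suc.prems assms(2)], of "xpow g j"] assms by simp
  also have "\<dots> \<approx>\<^sub>S ([LY (g [^] j \<otimes> (g \<otimes> a)) b] @ xpow ?g' j) @ [LX ?g']"
    using sg_congR[OF Suc.IH[OF ga]] assms by simp
  also have "\<dots> = [LY (g [^] Suc j \<otimes> a) b] @ xpow ?g' (Suc j)"
    using assms Suc.prems by (simp add: m_assoc replicate_append_same)
  finally show ?case .
qed simp

lemma y_xpow_shift:
  assumes "g \<in> Os" "a \<in> carrier G"
  shows "b \<in> carrier G \<Longrightarrow>
    [LY a b] @ xpow g j \<approx>\<^sub>S xpow (gconj G g (inv a)) j @ [LY a (inv (g [^] j) \<otimes> b)]"
proof (induction j arbitrary: b)
  case (Suc j)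
  let ?g' = "gconj G g (inv a)"
  have gb: "inv g \<otimes> b \<in> carrier G" using assms Suc.prems by simp
  have "[LY a b] @ xpow g (Suc j) \<approx>\<^sub>S [LX ?g', LY a (inv g \<otimes> b)] @ xpow g j"
    using sg_congR[OF y_x_shift[OF assms Suc.prems], of "xpow g j"] assms by simp
  also have "\<dots> \<approx>\<^sub>S [LX ?g'] @ xpow ?g' j @ [LY a (inv (g [^] j) \<otimes> (inv g \<otimes> b))]"
    using sg_congL[OF Suc.IH[OF gb], of "[LX ?g']"] assms by simp
  also have "inv (g [^] j) \<otimes> (inv g \<otimes> b) = inv (g [^] Suc j) \<otimes> b"
    using assms Suc.prems
    by (simp add: m_assoc[symmetric] inv_mult_group[symmetric] nat_pow_mult_self_commute)
  finally show ?case by simp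
qed simp

lemma comm_one_y_central:
  assumes "a \<in> carrier G" "b \<in> carrier G" "gcomm G a b = \<one>"
  shows "is_x_word v \<Longrightarrow> valid v \<Longrightarrow> v @ [LY a b] \<approx>\<^sub>S [LY a b] @ v"
proof (induction v)
  case (Cons l v)
  then obtain k where l: "l = LX k" and k: "k \<in> Os" and v: "is_x_word v" "valid v"
    by auto
  have "[LX k] @ v @ [LY a b] \<approx>\<^sub>S [LX k] @ [LY a b] @ v"
    using sg_congL[OF Cons.IH[OF v], of "[LX k]"] k by simp
  also have "\<dots> \<approx>\<^sub>S [LY a b, LX k] @ v"
    using sg_congR[OF x_y_swap[OF k assms(1,2)] v(2)] assms k by simp
  finally show ?case using l by simp
qed simp

lemma xpow_order_conj_x_label:
  assumes u: "is_x_word u" "valid u" "s \<in> labels u" and g: "g \<in> Os" "g [^] p = \<one>"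
  shows "u @ xpow g p \<approx>\<^sub>S u @ xpow (gconj G g s) p"
proof -
  obtain u1 u2 where uu: "u = u1 @ LX s # u2"
    using u(1,3) split_list[of "LX s" u] by (fastforce simp: is_x_word_def)
  have s: "s \<in> Os" and v: "is_x_word u1" "valid u1" "is_x_word u2" "valid u2" using u uu by auto
  let ?g' = "gconj G g s"
  have g': "?g' \<in> Os" "?g' [^] p = \<one>" using g s by (simp_all add: gconj_pow_eq_one)
  have "u @ xpow g p \<approx>\<^sub>S u1 @ xpow g p @ [LX s] @ u2"
    using sg_congL[OF sg_sym[OF xpow_order_central[OF g, of "[LX s] @ u2"]] v(2)] v s uu by simp
  also have "\<dots> \<approx>\<^sub>S u1 @ [LX s] @ xpow ?g' p @ u2"
    using sg_congL[OF sg_congR[OF xpow_x_swap[OF g(1) s, of p] v(4)] v(2)] by simp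
  also have "\<dots> \<approx>\<^sub>S u1 @ [LX s] @ u2 @ xpow ?g' p"
    using sg_congL[OF xpow_order_central[OF g' v(3,4)], of "u1 @ [LX s]"] v s by simp
  finally show ?thesis using uu by simp
qed

lemma xpow_order_conj_fst_at_y:
  assumes g: "g \<in> Os" "g [^] p = \<one>" and ab: "a \<in> carrier G" "b \<in> carrier G"
  shows "xpow g p @ [LY a b] \<approx>\<^sub>S xpow (gconj G g a) p @ [LY a b]"
proof -
  let ?g' = "gconj G g a"
  have g': "?g' \<in> Os" "?g' [^] p = \<one>" using g ab by (simp_all add: gconj_pow_eq_one)
  have "xpow g p @ [LY a b] \<approx>\<^sub>S [LY a b] @ xpow ?g' p"
    using sg_sym[OF y_xpow_shift[OF g'(1) ab, of p]] g' ab g by simp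
  also have "\<dots> \<approx>\<^sub>S xpow ?g' p @ [LY a b]" using xpow_order_central_y[OF g' ab] .
  finally show ?thesis .
qed

lemma xpow_order_conj_inv_snd_at_y:
  assumes g: "g \<in> Os" "g [^] p = \<one>" and ab: "a \<in> carrier G" "b \<in> carrier G"
  shows "xpow g p @ [LY a b] \<approx>\<^sub>S xpow (gconj G g (inv b)) p @ [LY a b]"
proof -
  let ?g' = "gconj G g (inv b)"
  have g': "?g' \<in> Os" "?g' [^] p = \<one>" using g ab by (simp_all add: gconj_pow_eq_one)
  have "xpow g p @ [LY a b] \<approx>\<^sub>S [LY a b] @ xpow ?g' p"
    using xpow_y_shift[OF g(1) ab(2) ab(1), of p] g ab by simp
  also have "\<dots> \<approx>\<^sub>S xpow ?g' p @ [LY a b]" using xpow_order_central_y[OF g' ab] .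
  finally show ?thesis .
qed

lemma xpow_order_replace_before_y_word:
  assumes ab: "(a, b) \<in> set ab" "valid (y_word ab)" and u: "valid u" and r: "valid r"
    and g: "g \<in> Os" "g [^] p = \<one>" and g': "g' \<in> Os" "g' [^] p = \<one>"
    and at_y: "xpow g p @ [LY a b] \<approx>\<^sub>S xpow g' p @ [LY a b]"
  shows "u @ xpow g p @ y_word ab @ r \<approx>\<^sub>S u @ xpow g' p @ y_word ab @ r"
proof -
  obtain ab1 ab2 where split: "ab = ab1 @ (a, b) # ab2" using split_list[OF ab(1)] by blast
  have v: "valid (y_word ab1)" "valid (LY a b # y_word ab2 @ r)" using ab(2) r split by auto
  have move: "u @ xpow h p @ y_word ab @ r \<approx>\<^sub>S (u @ y_word ab1) @ (xpow h p @ [LY a b]) @ y_word ab2 @ r"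
    if "h \<in> Os" "h [^] p = \<one>" for h
    using sgeq_append_cong[OF xpow_order_central_y_word[OF that v(1)] u v(2)] split by simp
  have "u @ xpow g p @ y_word ab @ r \<approx>\<^sub>S (u @ y_word ab1) @ (xpow g p @ [LY a b]) @ y_word ab2 @ r"
    using move[OF g] .
  also have "\<dots> \<approx>\<^sub>S (u @ y_word ab1) @ (xpow g' p @ [LY a b]) @ y_word ab2 @ r"
    using sgeq_append_cong[OF at_y, of "u @ y_word ab1" "y_word ab2 @ r"] u v ab(2) r split by simp
  also have "\<dots> \<approx>\<^sub>S u @ xpow g' p @ y_word ab @ r"
    using sg_sym[OF move[OF g']] .
  finally show ?thesis .
qed

lemma xpow_order_conj_pair_entry:
  assumes ab: "(a, b) \<in> set ab" "valid (y_word ab)" and u: "valid u" and r: "valid r"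
    and g: "g \<in> Os" "g [^] p = \<one>" and t: "t = a \<or> t = inv b"
  shows "u @ xpow g p @ y_word ab @ r \<approx>\<^sub>S u @ xpow (gconj G g t) p @ y_word ab @ r"
proof -
  have ab_carrier: "a \<in> carrier G" "b \<in> carrier G" using ab by (auto simp: valid_word_def)
  then have "t \<in> carrier G" using t by auto
  then have g': "gconj G g t \<in> Os" "gconj G g t [^] p = \<one>" using g by (simp_all add: gconj_pow_eq_one)
  have "xpow g p @ [LY a b] \<approx>\<^sub>S xpow (gconj G g t) p @ [LY a b]"
    using t xpow_order_conj_fst_at_y[OF g ab_carrier] xpow_order_conj_inv_snd_at_y[OF g ab_carrier] by blast
  then show ?thesis by (rule xpow_order_replace_before_y_word[OF ab u r g g'])
qed

lemma xpow_order_conj_generate: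
  assumes fin: "finite (carrier G)" and u: "is_x_word u" "valid u" and ab: "valid (y_word ab)"
    and r: "valid r" and t: "t \<in> generate G (labels (u @ y_word ab))"
    and g: "g \<in> Os" "g [^] p = \<one>"
  shows "u @ xpow g p @ y_word ab @ r \<approx>\<^sub>S u @ xpow (gconj G g t) p @ y_word ab @ r"
proof -
  define P where "P t \<longleftrightarrow> (\<forall>g. g \<in> Os \<longrightarrow> g [^] p = \<one> \<longrightarrow>
     u @ xpow g p @ y_word ab @ r \<approx>\<^sub>S u @ xpow (gconj G g t) p @ y_word ab @ r)" for t
  have one: "P \<one>" unfolding P_def by simp
  have mult: "P (x \<otimes> y)" if xy: "x \<in> carrier G" "y \<in> carrier G" "P x" "P y" for x y
    unfolding P_def
  proof (intro allI impI)
    fix g assume g: "g \<in> Os" "g [^] p = \<one>"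
    have "u @ xpow g p @ y_word ab @ r \<approx>\<^sub>S u @ xpow (gconj G g x) p @ y_word ab @ r"
      using xy(3) g P_def by blast
    also have "\<dots> \<approx>\<^sub>S u @ xpow (gconj G (gconj G g x) y) p @ y_word ab @ r"
      using xy g P_def by (simp add: gconj_pow_eq_one)
    finally show "u @ xpow g p @ y_word ab @ r \<approx>\<^sub>S u @ xpow (gconj G g (x \<otimes> y)) p @ y_word ab @ r"
      using xy g by (simp add: gconj_gconj)
  qed
  have gens: "P s" if s: "s \<in> labels (u @ y_word ab)" for s
  proof -
    consider (x) "s \<in> labels u" | (a) b where "(s, b) \<in> set ab" | (b) a where "(a, s) \<in> set ab"
      using s by auto
    then show ?thesis
    proof cases
      case x
      have "u @ xpow g p @ y_word ab @ r \<approx>\<^sub>S u @ xpow (gconj G g s) p @ y_word ab @ r"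
        if "g \<in> Os" "g [^] p = \<one>" for g
        using sg_congR[OF xpow_order_conj_x_label[OF u x that], of "y_word ab @ r"] ab r by simp
      then show ?thesis unfolding P_def by blast
    next
      case (a b)
      then show ?thesis using xpow_order_conj_pair_entry[OF a ab u(2) r] unfolding P_def by blast
    next
      case (b a)
      then have "P (inv s)" using xpow_order_conj_pair_entry[OF b ab u(2) r] unfolding P_def by blast
      moreover have "s \<in> carrier G" using b ab by (auto simp: valid_word_def)
      ultimately show ?thesis using finite_mult_closed_inv[OF fin one mult, of "inv s"] by simp
    qed
  qed
  have "P t"
    using finite_generate_induct[OF fin labels_valid_carrier t one gens mult] u ab by simp
  then show ?thesis using g P_def by blast
qed

definition conj_x :: "'a \<Rightarrow> 'a letter \<Rightarrow> 'a letter" where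
  "conj_x t l = (case l of LX k \<Rightarrow> LX (gconj G k t) | LY a b \<Rightarrow> LY a b)"

lemma conj_x_simps [simp]: "conj_x t (LX k) = LX (gconj G k t)" "conj_x t (LY a b) = LY a b"
  by (simp_all add: conj_x_def)

definition same_tau :: "'a letter list \<Rightarrow> 'a letter list \<Rightarrow> bool" where
  "same_tau u v \<longleftrightarrow> (\<forall>C\<in>set Cs. tau C u = tau C v)"

lemma same_tau_refl [simp]: "same_tau u u"
  by (simp add: same_tau_def)

lemma same_tau_trans [trans]: "same_tau u v \<Longrightarrow> same_tau v w \<Longrightarrow> same_tau u w"
  by (simp add: same_tau_def)

lemma same_tau_append: "same_tau u u' \<Longrightarrow> same_tau v v' \<Longrightarrow> same_tau (u @ v) (u' @ v')"
  by (simp add: same_tau_def)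

lemma same_tau_xpow_gconj: "k \<in> carrier G \<Longrightarrow> t \<in> carrier G \<Longrightarrow> same_tau (xpow (gconj G k t) n) (xpow k n)"
  using gconj_mem_class_iff by (simp add: same_tau_def)

lemma conj_x_word:
  assumes "t \<in> carrier G" "is_x_word v" "valid v"
  shows "is_x_word (map (conj_x t) v)" "valid (map (conj_x t) v)" "same_tau (map (conj_x t) v) v"
    "labels (map (conj_x t) v) = (\<lambda>k. gconj G k t) ` labels v"
  using assms(2,3) by (induction v) (auto simp: same_tau_def assms(1) gconj_mem_class_iff)

lemma x_move_right:
  assumes "g \<in> Os"
  shows "is_x_word v \<Longrightarrow> valid v \<Longrightarrow> LX g # v \<approx>\<^sub>S map (conj_x (inv g)) v @ [LX g]"
proof (induction v)
  case (Cons l v)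
  then obtain k where l: "l = LX k" and k: "k \<in> Os" and v: "is_x_word v" "valid v"
    by auto
  have "[LX g, LX k] @ v \<approx>\<^sub>S [LX (gconj G k (inv g))] @ LX g # v"
    using sg_congR[OF x_x_swap_back[OF assms k] v(2)] by simp
  also have "\<dots> \<approx>\<^sub>S [LX (gconj G k (inv g))] @ map (conj_x (inv g)) v @ [LX g]"
    using sg_congL[OF Cons.IH[OF v], of "[LX (gconj G k (inv g))]"] assms k by simp
  finally show ?case using l by simp
qed simp

lemma generate_insert_conj_inv:
  assumes "g \<in> carrier G" "A \<subseteq> carrier G"
  shows "generate G (insert g A) \<subseteq> generate G (insert g ((\<lambda>k. gconj G k (inv g)) ` A))"
proof (rule generate_subgroup_incl[OF _ generate_is_subgroup])
  let ?H = "generate G (insert g ((\<lambda>k. gconj G k (inv g)) ` A))"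
  have "k \<in> ?H" if k: "k \<in> A" for k
  proof -
    have "inv g \<in> ?H" "gconj G k (inv g) \<in> ?H" "g \<in> ?H"
      using k by (blast intro: generate.inv generate.incl)+
    then have "inv g \<otimes> gconj G k (inv g) \<otimes> g \<in> ?H" by (intro generate.eng)
    then show "k \<in> ?H" using assms k by (auto simp: gconj_def m_assoc)
  qed
  then show "insert g A \<subseteq> ?H" by (auto intro: generate.incl)
  show "insert g ((\<lambda>k. gconj G k (inv g)) ` A) \<subseteq> carrier G" using assms by auto
qed

lemma gather_x_letters:
  assumes g: "g \<in> Os"
  shows "is_x_word w \<Longrightarrow> valid w \<Longrightarrow> \<exists>w'. is_x_word w' \<and> valid w' \<and>
    w \<approx>\<^sub>S w' @ xpow g (count_list w (LX g)) \<and> same_tau (w' @ xpow g (count_list w (LX g))) w \<and>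
    labels w \<subseteq> generate G (insert g (labels w'))"
proof (induction w)
  case Nil
  show ?case by (intro exI[of _ "[]"]) simp
next
  case (Cons l w)
  then obtain k where l: "l = LX k" and k: "k \<in> Os" and w: "is_x_word w" "valid w"
    by auto
  let ?c = "count_list w (LX g)"
  obtain w0 where w0: "is_x_word w0" "valid w0" "w \<approx>\<^sub>S w0 @ xpow g ?c"
    "same_tau (w0 @ xpow g ?c) w" "labels w \<subseteq> generate G (insert g (labels w0))"
    using Cons.IH[OF w] by blast
  show ?case
  proof (cases "k = g")
    case True
    define w' where "w' = map (conj_x (inv g)) w0"
    have w': "is_x_word w'" "valid w'" "same_tau w' w0" "labels w' = (\<lambda>k. gconj G k (inv g)) ` labels w0"
      unfolding w'_def using conj_x_word[OF inv_closed[OF Os_carrier[OF g]] w0(1,2)] by simp_all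
    have "LX g # w \<approx>\<^sub>S (LX g # w0) @ xpow g ?c"
      using sg_congL[OF w0(3), of "[LX g]"] g by simp
    also have "\<dots> \<approx>\<^sub>S (w' @ [LX g]) @ xpow g ?c"
      unfolding w'_def by (rule sg_congR[OF x_move_right[OF g w0(1,2)]]) (use g in simp)
    also have "(w' @ [LX g]) @ xpow g ?c = w' @ xpow g (Suc ?c)"
      by simp
    finally have "LX g # w \<approx>\<^sub>S w' @ xpow g (Suc ?c)" .
    moreover have "same_tau (w' @ xpow g (Suc ?c)) (LX g # w)"
      using w'(3) w0(4) by (auto simp: same_tau_def)
    moreover have "labels (LX g # w) \<subseteq> generate G (insert g (labels w'))"
      using w0(5) generate_insert_conj_inv[of g "labels w0"] labels_valid_carrier[OF w0(2)] g w'(4)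
      by (auto intro: generate.incl)
    ultimately show ?thesis using l True w'(1,2) by (intro exI[of _ w']) simp
  next
    case False
    have "LX k # w \<approx>\<^sub>S (LX k # w0) @ xpow g ?c"
      using sg_congL[OF w0(3), of "[LX k]"] k by simp
    moreover have "same_tau ((LX k # w0) @ xpow g ?c) (LX k # w)"
      using w0(4) by (auto simp: same_tau_def)
    moreover have "labels (LX k # w) \<subseteq> generate G (insert g (labels (LX k # w0)))"
    proof -
      have "generate G (insert g (labels w0)) \<subseteq> generate G (insert g (labels (LX k # w0)))"
        by (rule mono_generate) auto
      then show ?thesis using w0(5) by (simp add: generate.incl)
    qed
    ultimately show ?thesis using l False k w0 by (intro exI[of _ "LX k # w0"]) simp
  qed
qed

end

locale finite_equipped_group = equipped_group +
  assumes finite_carrier: "finite (carrier G)"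
    and generated: "generate G (\<Union>(set Cs)) = carrier G"

context finite_equipped_group
begin

definition tau_large :: "'a letter list \<Rightarrow> bool" where
  "tau_large w \<longleftrightarrow> (\<forall>C\<in>set Cs. \<forall>g\<in>C. card C * ord g < tau C w)"

definition rich :: "'a letter list \<Rightarrow> bool" where
  "rich w \<longleftrightarrow> is_x_word w \<and> valid w \<and> tau_large w \<and> G_sub G w = carrier G"

lemma tau_large_same_tau: "same_tau u v \<Longrightarrow> tau_large v \<Longrightarrow> tau_large u"
  by (simp add: same_tau_def tau_large_def)

lemma split_off_order_block:
  assumes w: "is_x_word w" "valid w" "tau_large w" and C: "C \<in> set Cs"
  obtains u g where "g \<in> C" "is_x_word u" "valid u" "g \<in> labels u"
    "w \<approx>\<^sub>S u @ xpow g (ord g)" "same_tau (u @ xpow g (ord g)) w" "labels w \<subseteq> generate G (labels u)"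
proof -
  have "finite C" using class_subset_carrier[OF C] finite_carrier finite_subset by blast
  then obtain g where g: "g \<in> C" "ord g < count_list w (LX g)"
    using tau_large_imp_count_large[of C ord w] class_nonempty[OF C] w(3) C
    by (auto simp: tau_large_def)
  have gO: "g \<in> Os" using C g(1) by (auto simp: Union_iff)
  let ?c = "count_list w (LX g)"
  obtain w' where w': "is_x_word w'" "valid w'" "w \<approx>\<^sub>S w' @ xpow g ?c"
    "same_tau (w' @ xpow g ?c) w" "labels w \<subseteq> generate G (insert g (labels w'))"
    using gather_x_letters[OF gO w(1,2)] by blast
  define u where "u = w' @ xpow g (?c - ord g)"
  have split: "w' @ xpow g ?c = u @ xpow g (ord g)"
    unfolding u_def using g(2) by (simp add: replicate_add[symmetric])
  have "labels u = insert g (labels w')" unfolding u_def using g(2) by auto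
  then show thesis
    using that[of g u] g(1) w' gO split by (simp add: u_def)
qed

lemma order_block_of_class_member:
  assumes w: "is_x_word w" "valid w" "tau_large w" and C: "C \<in> set Cs" "h \<in> C"
    and ab: "valid (y_word ab)" and r: "valid r" and gen: "G_sub G (w @ y_word ab) = carrier G"
  obtains u p where "0 < p" "h [^] p = \<one>" "is_x_word u" "valid u" "labels w \<subseteq> generate G (labels u)"
    "same_tau (u @ xpow h p) w" "w @ y_word ab @ r \<approx>\<^sub>S u @ xpow h p @ y_word ab @ r"
proof -
  obtain u g where u: "g \<in> C" "is_x_word u" "valid u" "g \<in> labels u"
    "w \<approx>\<^sub>S u @ xpow g (ord g)" "same_tau (u @ xpow g (ord g)) w" "labels w \<subseteq> generate G (labels u)"
    by (rule split_off_order_block[OF w C(1)])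
  have gO: "g \<in> Os" using C(1) u(1) by (auto simp: Union_iff)
  then have g: "g \<in> Os" "g [^] ord g = \<one>" by simp_all
  obtain t where t: "t \<in> carrier G" "h = gconj G g t" using class_conjugate[OF C(1) u(1) C(2)] .
  have "G_sub G (u @ y_word ab) = carrier G"
    using G_sub_append_eq_carrier[OF gen u(7,3) ab] .
  then have "t \<in> generate G (labels (u @ y_word ab))" using t(1) by (simp add: G_sub_def)
  then have "u @ xpow g (ord g) @ y_word ab @ r \<approx>\<^sub>S u @ xpow h (ord g) @ y_word ab @ r"
    using xpow_order_conj_generate[OF finite_carrier u(2,3) ab r _ g] t(2) by simp
  moreover have "w @ y_word ab @ r \<approx>\<^sub>S u @ xpow g (ord g) @ y_word ab @ r"
    using sg_congR[OF u(5), of "y_word ab @ r"] ab r by simp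
  ultimately have "w @ y_word ab @ r \<approx>\<^sub>S u @ xpow h (ord g) @ y_word ab @ r"
    by (blast intro: sg_trans)
  moreover have "same_tau (u @ xpow h (ord g)) w"
    using same_tau_trans[OF same_tau_append[OF same_tau_refl same_tau_xpow_gconj] u(6)] g t by simp
  moreover have "0 < ord g" using ord_ge_1[OF finite_carrier Os_carrier[OF gO]] by simp
  moreover have "h [^] ord g = \<one>" using g t by (simp add: gconj_pow_eq_one)
  ultimately show thesis using that u(2,3,7) by blast
qed

section \<open>Normalising the y-letters\<close>

lemma rich_x_word: "rich w \<Longrightarrow> is_x_word w \<and> valid w"
  by (simp add: rich_def)

lemma rich_nonempty:
  assumes "rich w" "Cs \<noteq> []"
  shows "w \<noteq> []"
proof -
  have "hd Cs \<in> set Cs" using assms(2) by simp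
  moreover obtain g where "g \<in> hd Cs" using class_nonempty[OF calculation] by blast
  ultimately show ?thesis using assms(1) by (auto simp: rich_def tau_large_def)
qed

text \<open>A block of \<open>x\<^sub>h\<close> is produced next to the y-letter, and its last letter is consumed by r3.\<close>

lemma rich_mult_y_fst_Os:
  assumes w: "rich w" and h: "h \<in> Os" and ab: "a \<in> carrier G" "b \<in> carrier G" and r: "valid r"
  obtains w' where "rich w'" "w @ LY a b # r \<approx>\<^sub>S w' @ LY (h \<otimes> a) b # r"
proof -
  obtain C where C: "C \<in> set Cs" "h \<in> C" using h by (auto simp: Union_iff)
  have w': "is_x_word w" "valid w" "tau_large w" "G_sub G (w @ y_word []) = carrier G"
    using w by (simp_all add: rich_def)
  obtain u p where u: "0 < p" "h [^] p = \<one>" "is_x_word u" "valid u" "labels w \<subseteq> generate G (labels u)"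
    "same_tau (u @ xpow h p) w" "w @ y_word [] @ LY a b # r \<approx>\<^sub>S u @ xpow h p @ y_word [] @ LY a b # r"
    by (rule order_block_of_class_member[OF w'(1-3) C _ _ w'(4), where r = "LY a b # r"])
      (use ab r in simp_all)
  define h' where "h' = gconj G h (a \<otimes> inv b \<otimes> inv a \<otimes> inv h)"
  have h': "h' \<in> Os" using h ab by (simp add: h'_def)
  define w'' where "w'' = u @ xpow h (p - 1) @ [LX h']"
  have split: "xpow h p = xpow h (p - 1) @ [LX h]"
    using u(1) by (cases p) (simp_all add: replicate_append_same)
  have "w @ LY a b # r \<approx>\<^sub>S (u @ xpow h (p - 1)) @ [LX h, LY a b] @ r"
    using u(7) split by simp
  also have "\<dots> \<approx>\<^sub>S (u @ xpow h (p - 1)) @ [LX h', LY (h \<otimes> a) b] @ r"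
    unfolding h'_def by (rule sgeq_append_cong[OF sg_base[OF base_rel.r3]]) (use h ab u(4) r in auto)
  finally have "w @ LY a b # r \<approx>\<^sub>S w'' @ LY (h \<otimes> a) b # r" by (simp add: w''_def)
  moreover have "rich w''"
    unfolding rich_def
  proof (intro conjI)
    show x: "is_x_word w''" "valid w''" using u(3,4) h h' by (simp_all add: w''_def)
    have "same_tau w'' (u @ xpow h p)"
      using h ab gconj_mem_class_iff split by (simp add: same_tau_def w''_def h'_def)
    then show "tau_large w''" using tau_large_same_tau[OF same_tau_trans[OF _ u(6)] w'(3)] by blast
    have "generate G (labels u) \<subseteq> generate G (labels w'')"
      by (rule mono_generate) (auto simp: w''_def)
    then have "labels w \<subseteq> generate G (labels w'')" using u(5) by blast
    then show "G_sub G w'' = carrier G"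
      using generate_eq_carrier_if_subset[OF _ _ labels_valid_carrier[OF x(2)]] w'(4)
      by (simp add: G_sub_def)
  qed
  ultimately show thesis using that by blast
qed

lemma rich_mult_y_fst:
  assumes t: "t \<in> carrier G"
  shows "\<forall>w a b r. rich w \<longrightarrow> a \<in> carrier G \<longrightarrow> b \<in> carrier G \<longrightarrow> valid r \<longrightarrow>
    (\<exists>w'. rich w' \<and> w @ LY a b # r \<approx>\<^sub>S w' @ LY (t \<otimes> a) b # r)"
    (is "?P t")
proof (rule finite_generate_induct[OF finite_carrier _ _ _ _ _, of Os])
  show "t \<in> generate G Os" using t generated by simp
  show "Os \<subseteq> carrier G" using Os_carrier by blast
  show "?P \<one>" by auto
  show "?P h" if "h \<in> Os" for h
    using rich_mult_y_fst_Os[OF _ that] by metis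
  show "?P (x \<otimes> y)" if xy: "x \<in> carrier G" "y \<in> carrier G" "?P x" "?P y" for x y
  proof (intro allI impI)
    fix w a b r assume w: "rich w" "a \<in> carrier G" "b \<in> carrier G" "valid r"
    obtain w1 where w1: "rich w1" "w @ LY a b # r \<approx>\<^sub>S w1 @ LY (y \<otimes> a) b # r"
      using xy(4) w by blast
    obtain w2 where w2: "rich w2" "w1 @ LY (y \<otimes> a) b # r \<approx>\<^sub>S w2 @ LY (x \<otimes> (y \<otimes> a)) b # r"
      using xy(3) w1(1) xy(2) w by blast
    have "w @ LY a b # r \<approx>\<^sub>S w2 @ LY (x \<otimes> y \<otimes> a) b # r"
      using sg_trans[OF w1(2) w2(2)] xy w by (simp add: m_assoc)
    then show "\<exists>w'. rich w' \<and> w @ LY a b # r \<approx>\<^sub>S w' @ LY (x \<otimes> y \<otimes> a) b # r"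
      using w2(1) by blast
  qed
qed

lemma y_one_snd_move_label:
  assumes w: "is_x_word w" "valid w" "h \<in> labels w" and r: "valid r" and c: "c \<in> carrier G"
  shows "w @ LY \<one> c # r \<approx>\<^sub>S w @ LY \<one> (inv h \<otimes> c) # r"
proof -
  obtain w1 w2 where ww: "w = w1 @ LX h # w2"
    using w(1,3) split_list[of "LX h" w] by (fastforce simp: is_x_word_def)
  have v: "valid w1" "is_x_word w2" "valid w2" "h \<in> Os" using w ww by auto
  have to_front: "w @ LY \<one> d # r \<approx>\<^sub>S w1 @ [LY \<one> d, LX h] @ w2 @ r" if d: "d \<in> carrier G" for d
  proof -
    have "w @ LY \<one> d # r = (w1 @ [LX h]) @ (w2 @ [LY \<one> d]) @ r" using ww by simp
    also have "\<dots> \<approx>\<^sub>S (w1 @ [LX h]) @ ([LY \<one> d] @ w2) @ r"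
      using sgeq_append_cong[OF comm_one_y_central[OF one_closed d _ v(2,3)], of "w1 @ [LX h]" r] v r d
      by simp
    also have "\<dots> \<approx>\<^sub>S w1 @ [LY \<one> d, LX h] @ w2 @ r"
      using sgeq_append_cong[OF x_y_swap[OF v(4) one_closed d], of w1 "w2 @ r"] v r d by simp
    finally show ?thesis .
  qed
  have "w @ LY \<one> c # r \<approx>\<^sub>S w1 @ [LY \<one> c, LX h] @ w2 @ r" using to_front[OF c] .
  also have "\<dots> \<approx>\<^sub>S w1 @ [LY \<one> (inv h \<otimes> c), LX h] @ w2 @ r"
    using sgeq_append_cong[OF y_one_x_shift[OF v(4) c]] v r by simp
  also have "\<dots> \<approx>\<^sub>S w @ LY \<one> (inv h \<otimes> c) # r" using sg_sym[OF to_front] v c by simp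
  finally show ?thesis .
qed

lemma rich_y_one_snd_normalise:
  assumes w: "rich w" and r: "valid r" and c: "c \<in> carrier G"
  shows "w @ LY \<one> c # r \<approx>\<^sub>S w @ LY \<one> \<one> # r"
proof -
  have w': "is_x_word w" "valid w" "generate G (labels w) = carrier G"
    using w by (simp_all add: rich_def G_sub_def)
  define Q where "Q t \<longleftrightarrow> (\<forall>c\<in>carrier G. w @ LY \<one> c # r \<approx>\<^sub>S w @ LY \<one> (t \<otimes> c) # r)" for t
  have "Q (inv c)"
  proof (rule finite_generate_induct[OF finite_carrier labels_valid_carrier[OF w'(2)]])
    show "inv c \<in> generate G (labels w)" using c w'(3) by simp
    show "Q \<one>" by (simp add: Q_def)
    show "Q h" if h: "h \<in> labels w" for h
      unfolding Q_def
    proof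
      fix c assume c: "c \<in> carrier G"
      have "h \<in> carrier G" using labels_valid_carrier[OF w'(2)] h by blast
      then show "w @ LY \<one> c # r \<approx>\<^sub>S w @ LY \<one> (h \<otimes> c) # r"
        using sg_sym[OF y_one_snd_move_label[OF w'(1,2) h r, of "h \<otimes> c"]] c by simp
    qed
    show "Q (x \<otimes> y)" if xy: "x \<in> carrier G" "y \<in> carrier G" "Q x" "Q y" for x y
      unfolding Q_def
    proof
      fix c assume c: "c \<in> carrier G"
      have "w @ LY \<one> c # r \<approx>\<^sub>S w @ LY \<one> (y \<otimes> c) # r" using xy(4) c Q_def by blast
      also have "\<dots> \<approx>\<^sub>S w @ LY \<one> (x \<otimes> (y \<otimes> c)) # r" using xy c Q_def by simp
      finally show "w @ LY \<one> c # r \<approx>\<^sub>S w @ LY \<one> (x \<otimes> y \<otimes> c) # r" using xy c by (simp add: m_assoc)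
    qed
  qed
  then have "w @ LY \<one> c # r \<approx>\<^sub>S w @ LY \<one> (inv c \<otimes> c) # r" using c unfolding Q_def by blast
  with c show ?thesis by simp
qed

lemma rich_y_normalise:
  assumes "rich w" "a \<in> carrier G" "b \<in> carrier G" "valid r"
  obtains w' where "rich w'" "w @ LY a b # r \<approx>\<^sub>S w' @ LY \<one> \<one> # r"
proof -
  obtain w' where w': "rich w'" "w @ LY a b # r \<approx>\<^sub>S w' @ LY (inv a \<otimes> a) b # r"
    using rich_mult_y_fst[of "inv a"] assms by blast
  then have "w @ LY a b # r \<approx>\<^sub>S w' @ LY \<one> \<one> # r"
    using sg_trans[OF _ rich_y_one_snd_normalise[OF w'(1) assms(4,3)]] assms(2) by simp
  then show thesis using that w'(1) by blast
qed

lemma rich_y_word_normalise: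
  "rich w \<Longrightarrow> valid (y_word ab) \<Longrightarrow>
    \<exists>z. rich z \<and> w @ y_word ab \<approx>\<^sub>S z @ replicate (length ab) (LY \<one> \<one>)"
proof (induction ab arbitrary: w)
  case (Cons x ab)
  obtain a b where x: "x = (a, b)" by fastforce
  have ab: "a \<in> carrier G" "b \<in> carrier G" "valid (y_word ab)" using Cons.prems x by auto
  obtain w' where w': "rich w'" "w @ LY a b # y_word ab \<approx>\<^sub>S w' @ LY \<one> \<one> # y_word ab"
    using rich_y_normalise[OF Cons.prems(1) ab] by blast
  obtain z where z: "rich z" "w' @ y_word ab \<approx>\<^sub>S z @ replicate (length ab) (LY \<one> \<one>)"
    using Cons.IH[OF w'(1) ab(3)] by blast
  let ?R = "replicate (length ab) (LY \<one> \<one>)"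
  have one_central: "v @ [LY \<one> \<one>] \<approx>\<^sub>S [LY \<one> \<one>] @ v" if "rich v" for v
    using comm_one_y_central[of \<one> \<one> v] rich_x_word[OF that] by simp
  have "w @ y_word (x # ab) \<approx>\<^sub>S (w' @ [LY \<one> \<one>]) @ y_word ab" using w'(2) x by simp
  also have "\<dots> \<approx>\<^sub>S [LY \<one> \<one>] @ w' @ y_word ab" using sg_congR[OF one_central[OF w'(1)] ab(3)] by simp
  also have "\<dots> \<approx>\<^sub>S ([LY \<one> \<one>] @ z) @ ?R" using sg_congL[OF z(2), of "[LY \<one> \<one>]"] by simp
  also have "\<dots> \<approx>\<^sub>S (z @ [LY \<one> \<one>]) @ ?R" using sg_congR[OF sg_sym[OF one_central[OF z(1)]]] by simp
  also have "\<dots> = z @ replicate (length (x # ab)) (LY \<one> \<one>)" by (simp add: replicate_append_same)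
  finally show ?case using z(1) by blast
qed auto

section \<open>Enlarging the generated subgroup\<close>

lemma enrich_step:
  assumes w: "is_x_word w" "valid w" "tau_large w" and ab: "valid (y_word ab)"
    and gen: "G_sub G (w @ y_word ab) = carrier G" and not_gen: "G_sub G w \<noteq> carrier G"
  obtains w' where "is_x_word w'" "valid w'" "tau_large w'" "G_sub G (w' @ y_word ab) = carrier G"
    "G_sub G w \<subset> G_sub G w'" "w @ y_word ab \<approx>\<^sub>S w' @ y_word ab"
proof -
  have "\<not> Os \<subseteq> G_sub G w"
  proof
    assume "Os \<subseteq> G_sub G w"
    then have "generate G Os \<subseteq> G_sub G w"
      unfolding G_sub_def
      by (rule generate_subgroup_incl[OF _ generate_is_subgroup[OF labels_valid_carrier[OF w(2)]]])
    then show False using generated not_gen G_sub_subset_carrier[OF w(2)] by simp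
  qed
  then obtain h C where h: "h \<notin> G_sub G w" "C \<in> set Cs" "h \<in> C" by (auto simp: Union_iff)
  obtain u p where u: "0 < p" "h [^] p = \<one>" "is_x_word u" "valid u" "labels w \<subseteq> generate G (labels u)"
    "same_tau (u @ xpow h p) w" "w @ y_word ab @ [] \<approx>\<^sub>S u @ xpow h p @ y_word ab @ []"
    by (rule order_block_of_class_member[OF w h(2,3) ab _ gen]) (rule valid_simps(1))
  define w' where "w' = u @ xpow h p"
  have hO: "h \<in> Os" using h(2,3) by (auto simp: Union_iff)
  have w': "is_x_word w'" "valid w'" using u(3,4) hO by (simp_all add: w'_def)
  have labels: "labels w \<subseteq> generate G (labels w')"
    using u(5) mono_generate[of "labels u" "labels w'"] by (auto simp: w'_def)
  have "G_sub G (w' @ y_word ab) = carrier G"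
    using G_sub_append_eq_carrier[OF gen labels w'(2) ab] .
  moreover have "G_sub G w \<subset> G_sub G w'"
  proof
    show "G_sub G w \<subseteq> G_sub G w'"
      unfolding G_sub_def
      by (rule generate_subgroup_incl[OF labels generate_is_subgroup[OF labels_valid_carrier[OF w'(2)]]])
    have "h \<in> G_sub G w'" using u(1) by (auto simp: G_sub_def w'_def intro: generate.incl)
    then show "G_sub G w \<noteq> G_sub G w'" using h(1) by blast
  qed
  moreover have "tau_large w'" using tau_large_same_tau[OF u(6) w(3)] by (simp add: w'_def)
  moreover have "w @ y_word ab \<approx>\<^sub>S w' @ y_word ab" using u(7) by (simp add: w'_def)
  ultimately show thesis using that w' by blast
qed

lemma enrich:
  "is_x_word w \<Longrightarrow> valid w \<Longrightarrow> tau_large w \<Longrightarrow> valid (y_word ab) \<Longrightarrow> G_sub G (w @ y_word ab) = carrier G \<Longrightarrow>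
    \<exists>w'. rich w' \<and> w @ y_word ab \<approx>\<^sub>S w' @ y_word ab"
proof (induction "card (carrier G) - card (G_sub G w)" arbitrary: w rule: less_induct)
  case less
  show ?case
  proof (cases "G_sub G w = carrier G")
    case True
    then show ?thesis using less.prems by (auto simp: rich_def)
  next
    case False
    obtain w' where w': "is_x_word w'" "valid w'" "tau_large w'" "G_sub G (w' @ y_word ab) = carrier G"
      "G_sub G w \<subset> G_sub G w'" "w @ y_word ab \<approx>\<^sub>S w' @ y_word ab"
      by (rule enrich_step[OF less.prems False])
    have "card (G_sub G w) < card (G_sub G w')"
      using psubset_card_mono[OF finite_subset[OF G_sub_subset_carrier[OF w'(2)] finite_carrier] w'(5)] .
    moreover have "card (G_sub G w') \<le> card (carrier G)"
      using card_mono[OF finite_carrier G_sub_subset_carrier[OF w'(2)]] .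
    ultimately obtain w'' where "rich w''" "w' @ y_word ab \<approx>\<^sub>S w'' @ y_word ab"
      using less.hyps[OF _ w'(1-3) less.prems(4) w'(4)] by (meson diff_less_mono2 order_less_le_trans)
    then show ?thesis using sg_trans[OF w'(6)] by blast
  qed
qed

end

theorem proposition5:
  fixes G :: "'a monoid" and Cs :: "'a set list"
    and s1 :: "'a letter list" and ab :: "('a \<times> 'a) list"
  assumes "equipped G Cs"
    and "finite (carrier G)"
    and "generate G (\<Union>(set Cs)) = carrier G"
    and "s1 \<noteq> []" and "is_x_word s1" and "valid_word G (\<Union>(set Cs)) s1"
    and "\<forall>i<length Cs. \<forall>g\<in>Cs!i. tau (Cs!i) s1 > card (Cs!i) * group.ord G g"
    and "\<forall>(a,b)\<in>set ab. a \<in> carrier G \<and> b \<in> carrier G"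
    and "G_sub G (s1 @ map (\<lambda>(a,b). LY a b) ab) = carrier G"
  shows "\<exists>z. z \<noteq> [] \<and> is_x_word z \<and> valid_word G (\<Union>(set Cs)) z \<and>
           sgeq G (\<Union>(set Cs)) (s1 @ map (\<lambda>(a,b). LY a b) ab)
                (z @ replicate (length ab) (LY \<one>\<^bsub>G\<^esub> \<one>\<^bsub>G\<^esub>))"
proof -
  interpret finite_equipped_group G Cs
    using assms(1-3) by unfold_locales
  have "tau_large s1"
    using assms(7) by (auto simp: tau_large_def in_set_conv_nth)
  moreover have ab: "valid (y_word ab)"
    using assms(8) by (auto simp: valid_word_def valid_letter_def)
  ultimately obtain w where w: "rich w" "s1 @ y_word ab \<approx>\<^sub>S w @ y_word ab"
    using enrich[OF assms(5,6) _ _ assms(9)] by blast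
  obtain z where z: "rich z" "w @ y_word ab \<approx>\<^sub>S z @ replicate (length ab) (LY \<one>\<^bsub>G\<^esub> \<one>\<^bsub>G\<^esub>)"
    using rich_y_word_normalise[OF w(1) ab] by blast
  have "Cs \<noteq> []"
    using assms(4-6) by (cases s1) (auto simp: is_x_word_def valid_word_def valid_letter_def)
  then show ?thesis
    using rich_nonempty[OF z(1)] rich_x_word[OF z(1)] sg_trans[OF w(2) z(2)] by blast
qed

end
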